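(* For every nonempty graph $G$ and every integer $t\ge 1$, \[\hat r(tK_2,G)\ge (t-1)\Delta(G)+|E(G)|.\] Consequently, $\hat r_\infty(G)\ge \Delta(G)/|E(G)|$.
   Context: All graphs are finite and simple; a graph is nonempty if it has at least one edge. $\Delta(G)$ is the maximum degree, $tK_2$ is a matching with $t$ edges. For graphs $F,G,H$, $F\to(G,H)$ means every red--blue coloring of $E(F)$ contains a red copy of $G$ or a blue copy of $H$, and $\hat r(G,H)=\min\{|E(F)|:F\to(G,H)\}$. For a nonempty graph $G$, $\hat r_\infty(G)=\lim_{t\to\infty}\frac{\hat r(tK_2,G)}{t\,|E(G)|}$ (this limit exists). *)

theory Defs
  imports Complex_Main
begin

type_synonym 'a graph = "'a set \<times> 'a set set"

definition verts :: "'a graph \<Rightarrow> 'a set" where "verts G = fst G"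
definition edges :: "'a graph \<Rightarrow> 'a set set" where "edges G = snd G"

definition simple_graph :: "'a graph \<Rightarrow> bool" where
  "simple_graph G \<longleftrightarrow> finite (verts G) \<and>
     (\<forall>e\<in>edges G. \<exists>u v. u \<noteq> v \<and> u \<in> verts G \<and> v \<in> verts G \<and> e = {u, v})"

definition degree :: "'a graph \<Rightarrow> 'a \<Rightarrow> nat" where
  "degree G v = card {e \<in> edges G. v \<in> e}"

definition max_degree :: "'a graph \<Rightarrow> nat" where
  "max_degree G = Max (degree G ` verts G)"

definition has_copy :: "'b graph \<Rightarrow> 'a set \<Rightarrow> 'a set set \<Rightarrow> bool" where
  "has_copy H V E \<longleftrightarrow> (\<exists>f. inj_on f (verts H) \<and> f ` verts H \<subseteq> V \<and>
                               (\<forall>e\<in>edges H. f ` e \<in> E))"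

text \<open>F \<rightarrow> (G,H): every red/blue colouring (R = red edges) yields a red G or a blue H.\<close>
definition arrows :: "'a graph \<Rightarrow> 'b graph \<Rightarrow> 'c graph \<Rightarrow> bool" where
  "arrows F G H \<longleftrightarrow> (\<forall>R. R \<subseteq> edges F \<longrightarrow>
      has_copy G (verts F) R \<or> has_copy H (verts F) (edges F - R))"

text \<open>Size Ramsey number; host graphs F range over finite simple graphs on nat vertices
  (every finite graph is isomorphic to one).\<close>
definition size_ramsey :: "'b graph \<Rightarrow> 'c graph \<Rightarrow> nat" where
  "size_ramsey G H = (LEAST m. \<exists>F :: nat graph. simple_graph F \<and> card (edges F) = m \<and> arrows F G H)"

definition matching :: "nat \<Rightarrow> nat graph" where
  "matching t = ({0..<2*t}, {{2*i, 2*i+1} | i. i < t})"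

definition rhat_inf :: "'a graph \<Rightarrow> real" where
  "rhat_inf G = lim (\<lambda>t. real (size_ramsey (matching t) G) / (real t * real (card (edges G))))"

end

theory Submission
  imports Defs
begin

(*
  Suppose F arrows (tK_2, G) and colour red all edges of F meeting a vertex set S
  with |S| < t. A red tK_2 would need t distinct vertices of S, so the remaining blue
  graph contains G, and in particular has a vertex of degree at least \<Delta>(G). Adding
  such a vertex to S, starting from S = {}, removes at least \<Delta>(G) new edges each
  time; after t - 1 steps the blue remainder still contains the |E(G)| edges of a
  copy of G.

  Since rhat_inf is defined by lim, which carries no information unless the
  sequence converges, convergence must be proved as well: disjoint unions of
  arrowing graphs make the size Ramsey numbers of tK_2 versus G subadditive in t,
  so by Fekete's lemma their quotients by t tend to their infimum, which is at least
  \<Delta>(G) by the bound above.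
*)

section \<open>Fekete's lemma\<close>

lemma subadditive_le_mult_add:
  fixes a :: "nat \<Rightarrow> real"
  assumes "\<And>m n. a (m + n) \<le> a m + a n"
  shows "a (q * m + r) \<le> real q * a m + a r"
proof (induction q)
  case (Suc q)
  have "a (Suc q * m + r) \<le> a m + a (q * m + r)"
    using assms[of m "q * m + r"] by (simp add: add.assoc)
  with Suc show ?case by (simp add: algebra_simps)
qed simp

lemma subadditive_quotient_le:
  fixes a :: "nat \<Rightarrow> real"
  assumes sub: "\<And>m n. a (m + n) \<le> a m + a n" and nonneg: "\<And>n. a n \<ge> 0"
    and "m \<ge> 1" "n \<ge> 1"
  shows "a n / n \<le> a m / m + Max (a ` {..<m}) / n"
proof -
  have "a n \<le> real (n div m) * a m + a (n mod m)"
    using subadditive_le_mult_add[of a "n div m" m "n mod m"] sub by simp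
  also have "a (n mod m) \<le> Max (a ` {..<m})"
    using \<open>m \<ge> 1\<close> by (intro Max_ge) auto
  finally have "a n / n \<le> real (n div m) * a m / n + Max (a ` {..<m}) / n"
    by (simp add: add_divide_distrib[symmetric] divide_right_mono)
  moreover have "real (n div m) * a m / n \<le> a m / m"
  proof -
    have "real (n div m) * m \<le> n"
      by (metis div_times_less_eq_dividend of_nat_le_iff of_nat_mult)
    then have "real (n div m) * m * a m \<le> n * a m"
      using nonneg by (rule mult_right_mono)
    then show ?thesis
      using assms(3,4) by (simp add: field_simps)
  qed
  ultimately show ?thesis by linarith
qed

lemma fekete_subadditive_limit:
  fixes a :: "nat \<Rightarrow> real"
  assumes sub: "\<And>m n. a (m + n) \<le> a m + a n" and nonneg: "\<And>n. a n \<ge> 0"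
  shows "(\<lambda>n. a n / n) \<longlonglongrightarrow> (INF n\<in>{1..}. a n / n)"
    (is "_ \<longlonglongrightarrow> ?L")
proof -
  have bdd: "bdd_below ((\<lambda>n. a n / n) ` {1..})"
    using nonneg by (intro bdd_belowI2[of _ 0]) simp
  show ?thesis
  proof (rule order_tendstoI)
    fix y assume "y < ?L"
    show "\<forall>\<^sub>F n in sequentially. y < a n / n"
      using eventually_ge_at_top[of "1::nat"]
      by eventually_elim (use \<open>y < ?L\<close> cINF_lower[OF bdd] in force)
  next
    fix y assume "?L < y"
    then obtain m where m: "m \<ge> 1" "a m / m < y"
      using bdd by (auto simp: cINF_less_iff)
    have "(\<lambda>n. a m / m + Max (a ` {..<m}) / real n) \<longlonglongrightarrow> a m / m"
      using tendsto_add[OF tendsto_const lim_const_over_n] by simp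
    then have "\<forall>\<^sub>F n in sequentially. a m / m + Max (a ` {..<m}) / real n < y"
      using m(2) by (rule order_tendstoD)
    then show "\<forall>\<^sub>F n in sequentially. a n / n < y"
      using eventually_ge_at_top[of "1::nat"]
    proof eventually_elim
      case (elim n)
      then show ?case
        using subadditive_quotient_le[OF sub nonneg m(1), of n] by linarith
    qed
  qed
qed

section \<open>Copies in simple graphs\<close>

lemma simple_graph_edgeE:
  assumes "simple_graph G" "e \<in> edges G"
  obtains u v where "u \<noteq> v" "u \<in> verts G" "v \<in> verts G" "e = {u, v}"
  using assms unfolding simple_graph_def by blast

lemma edges_subset_Pow_verts: "simple_graph G \<Longrightarrow> edges G \<subseteq> Pow (verts G)"
  unfolding simple_graph_def by auto

lemma finite_edges: "simple_graph G \<Longrightarrow> finite (edges G)"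
  using edges_subset_Pow_verts[of G] finite_subset by (auto simp: simple_graph_def)

lemma has_copy_mono: "has_copy H V E \<Longrightarrow> V \<subseteq> V' \<Longrightarrow> E \<subseteq> E' \<Longrightarrow> has_copy H V' E'"
  unfolding has_copy_def by (meson order_trans subsetD)

lemma has_copy_image:
  assumes "has_copy H V E" "inj_on h V"
  shows "has_copy H (h ` V) (image h ` E)"
proof -
  obtain f where f: "inj_on f (verts H)" "f ` verts H \<subseteq> V" "\<forall>e\<in>edges H. f ` e \<in> E"
    using assms(1) unfolding has_copy_def by blast
  have "inj_on (h \<circ> f) (verts H)"
    using f(1,2) assms(2) by (blast intro: comp_inj_on inj_on_subset)
  with f show ?thesis
    unfolding has_copy_def by (intro exI[of _ "h \<circ> f"]) (auto simp: image_comp)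
qed

lemma card_edges_le_of_has_copy:
  assumes "simple_graph H" "has_copy H V E" "finite E"
  shows "card (edges H) \<le> card E"
proof -
  obtain f where f: "inj_on f (verts H)" "\<forall>e\<in>edges H. f ` e \<in> E"
    using assms(2) unfolding has_copy_def by blast
  have "inj_on (image f) (edges H)"
    using inj_on_image_Pow[OF f(1)] edges_subset_Pow_verts[OF assms(1)] by (rule inj_on_subset)
  then show ?thesis
    using f(2) assms(3) by (intro card_inj_on_le) auto
qed

lemma degree_le_of_has_copy:
  assumes "simple_graph H" "has_copy H V E" "finite E" "v \<in> verts H"
  shows "\<exists>w\<in>V. degree H v \<le> card {e\<in>E. w \<in> e}"
proof -
  obtain f where f: "inj_on f (verts H)" "f ` verts H \<subseteq> V" "\<forall>e\<in>edges H. f ` e \<in> E"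
    using assms(2) unfolding has_copy_def by blast
  have "{e\<in>edges H. v \<in> e} \<subseteq> Pow (verts H)"
    using edges_subset_Pow_verts[OF assms(1)] by blast
  then have "inj_on (image f) {e\<in>edges H. v \<in> e}"
    using inj_on_image_Pow[OF f(1)] inj_on_subset by blast
  then have "card {e\<in>edges H. v \<in> e} \<le> card {e\<in>E. f v \<in> e}"
    using f(3) assms(3) by (intro card_inj_on_le) auto
  then show ?thesis
    using f(2) assms(4) unfolding degree_def by blast
qed

lemma max_degree_attained:
  assumes "simple_graph G" "edges G \<noteq> {}"
  obtains v where "v \<in> verts G" "degree G v = max_degree G"
proof -
  have "verts G \<noteq> {}" "finite (verts G)"
    using assms unfolding simple_graph_def by blast+
  then have "max_degree G \<in> degree G ` verts G"
    unfolding max_degree_def by (intro Max_in) auto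
  then show ?thesis
    using that by (metis imageE)
qed

lemma max_degree_le_card_edges:
  assumes "simple_graph G" "edges G \<noteq> {}"
  shows "max_degree G \<le> card (edges G)"
proof -
  obtain v where "v \<in> verts G" "degree G v = max_degree G"
    using max_degree_attained[OF assms] .
  moreover have "degree G v \<le> card (edges G)"
    unfolding degree_def using finite_edges[OF assms(1)] by (intro card_mono) auto
  ultimately show ?thesis
    by simp
qed

lemma arrowsD:
  "arrows F G H \<Longrightarrow> R \<subseteq> edges F \<Longrightarrow> has_copy G (verts F) R \<or> has_copy H (verts F) (edges F - R)"
  unfolding arrows_def by blast

section \<open>Copies of matchings\<close>

lemma verts_matching [simp]: "verts (matching t) = {0..<2*t}"
  by (simp add: matching_def verts_def)

lemma edges_matching [simp]: "edges (matching t) = {{2*i, 2*i+1} | i. i < t}"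
  by (simp add: matching_def edges_def)

lemma has_copy_matching_iff:
  "has_copy (matching t) V E \<longleftrightarrow>
     (\<exists>f. inj_on f {0..<2*t} \<and> f ` {0..<2*t} \<subseteq> V \<and> (\<forall>i<t. f ` {2*i, 2*i+1} \<in> E))"
proof -
  have "(\<forall>e\<in>edges (matching t). f ` e \<in> E) \<longleftrightarrow> (\<forall>i<t. f ` {2*i, 2*i+1} \<in> E)" for f :: "nat \<Rightarrow> 'a"
    unfolding edges_matching by blast
  then show ?thesis
    unfolding has_copy_def by simp
qed

lemma has_copy_matching_add:
  assumes "has_copy (matching s) V1 E1" "has_copy (matching t) V2 E2" "V1 \<inter> V2 = {}"
  shows "has_copy (matching (s + t)) (V1 \<union> V2) (E1 \<union> E2)"
proof -
  obtain f1 where f1: "inj_on f1 {0..<2*s}" "f1 ` {0..<2*s} \<subseteq> V1" "\<forall>i<s. f1 ` {2*i, 2*i+1} \<in> E1"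
    using assms(1) unfolding has_copy_matching_iff by blast
  obtain f2 where f2: "inj_on f2 {0..<2*t}" "f2 ` {0..<2*t} \<subseteq> V2" "\<forall>i<t. f2 ` {2*i, 2*i+1} \<in> E2"
    using assms(2) unfolding has_copy_matching_iff by blast
  define f where "f i = (if i < 2*s then f1 i else f2 (i - 2*s))" for i
  have f_in: "f i \<in> (if i < 2*s then V1 else V2)" if "i < 2*(s+t)" for i
    using f1(2) f2(2) that by (auto simp: f_def)
  have "inj_on f {0..<2*(s+t)}"
  proof (rule inj_onI)
    fix x y assume x: "x \<in> {0..<2*(s+t)}" and y: "y \<in> {0..<2*(s+t)}" and "f x = f y"
    then have same_side: "x < 2*s \<longleftrightarrow> y < 2*s"
      using f_in[of x] f_in[of y] assms(3) by (auto split: if_splits)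
    show "x = y"
    proof (cases "x < 2*s")
      case True
      then show ?thesis
        using same_side \<open>f x = f y\<close> inj_onD[OF f1(1)] by (auto simp: f_def)
    next
      case False
      then have "x - 2*s = y - 2*s"
        using same_side x y \<open>f x = f y\<close> by (intro inj_onD[OF f2(1)]) (auto simp: f_def)
      then show ?thesis
        using False same_side by simp
    qed
  qed
  moreover have "f ` {0..<2*(s+t)} \<subseteq> V1 \<union> V2"
    using f_in by (fastforce split: if_splits)
  moreover have "f ` {2*i, 2*i+1} \<in> E1 \<union> E2" if "i < s + t" for i
  proof (cases "i < s")
    case True
    then show ?thesis
      using f1(3) by (auto simp: f_def)
  next
    case False
    then have "Suc (2*i) - 2*s = Suc (2*(i-s))"
      by simp
    with False have "f ` {2*i, 2*i+1} = f2 ` {2*(i-s), 2*(i-s)+1}"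
      by (auto simp: f_def diff_mult_distrib2)
    then show ?thesis
      using f2(3) False that by auto
  qed
  ultimately show ?thesis
    unfolding has_copy_matching_iff by blast
qed

section \<open>The lower bound\<close>

definition incident_edges :: "'a set set \<Rightarrow> 'a set \<Rightarrow> 'a set set" where
  "incident_edges E S = {e\<in>E. e \<inter> S \<noteq> {}}"

lemma incident_edges_subset: "incident_edges E S \<subseteq> E"
  by (auto simp: incident_edges_def)

lemma incident_edges_insert:
  "incident_edges E (insert w S) = incident_edges E S \<union> {e \<in> E - incident_edges E S. w \<in> e}"
  by (auto simp: incident_edges_def)

lemma not_has_copy_matching_incident_edges:
  assumes "finite S" "card S < t"
  shows "\<not> has_copy (matching t) V (incident_edges E S)"
proof
  assume "has_copy (matching t) V (incident_edges E S)"
  then obtain f where f: "inj_on f {0..<2*t}" "\<forall>i<t. f ` {2*i, 2*i+1} \<in> incident_edges E S"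
    unfolding has_copy_matching_iff by blast
  define g where "g i = (SOME v. v \<in> f ` {2*i, 2*i+1} \<inter> S)" for i
  have g: "g i \<in> f ` {2*i, 2*i+1} \<inter> S" if "i < t" for i
    unfolding g_def some_in_eq using f(2) that by (simp add: incident_edges_def)
  have "inj_on g {..<t}"
  proof (rule inj_onI)
    fix i j assume ij: "i \<in> {..<t}" "j \<in> {..<t}" and "g i = g j"
    obtain x where x: "x \<in> {2*i, 2*i+1}" "g i = f x"
      using g[of i] ij(1) by auto
    obtain y where y: "y \<in> {2*j, 2*j+1}" "g j = f y"
      using g[of j] ij(2) by auto
    have "x < 2*t" "y < 2*t"
      using x(1) y(1) ij by auto
    then have "x = y"
      using inj_onD[OF f(1)] x(2) y(2) \<open>g i = g j\<close> by simp
    then show "i = j"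
      using x(1) y(1) by auto
  qed
  then have "card {..<t} \<le> card S"
    using g assms(1) by (intro card_inj_on_le) auto
  with assms(2) show False
    by simp
qed

lemma arrows_matching_has_copy_avoiding:
  assumes "arrows F (matching t) H" "finite S" "card S < t"
  shows "has_copy H (verts F) (edges F - incident_edges (edges F) S)"
proof -
  have "has_copy (matching t) (verts F) (incident_edges (edges F) S) \<or>
        has_copy H (verts F) (edges F - incident_edges (edges F) S)"
    using arrowsD[OF assms(1) incident_edges_subset] .
  then show ?thesis
    using not_has_copy_matching_incident_edges[OF assms(2,3)] by blast
qed

lemma incident_edges_greedy:
  assumes "finite E"
    and heavy: "\<And>S. finite S \<Longrightarrow> card S < t \<Longrightarrow> \<exists>w. D \<le> card {e \<in> E - incident_edges E S. w \<in> e}"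
    and "k < t"
  shows "\<exists>S. finite S \<and> card S \<le> k \<and> k * D \<le> card (incident_edges E S)"
  using \<open>k < t\<close>
proof (induction k)
  case 0
  show ?case
    by (intro exI[of _ "{}"]) simp
next
  case (Suc k)
  then obtain S where S: "finite S" "card S \<le> k" "k * D \<le> card (incident_edges E S)"
    by auto
  obtain w where w: "D \<le> card {e \<in> E - incident_edges E S. w \<in> e}"
    using heavy[OF S(1)] S(2) Suc.prems by force
  have "card (incident_edges E (insert w S)) =
        card (incident_edges E S) + card {e \<in> E - incident_edges E S. w \<in> e}"
    unfolding incident_edges_insert using assms(1) incident_edges_subset[of E S]
    by (intro card_Un_disjoint) (auto intro: finite_subset)
  moreover have "card (insert w S) \<le> Suc k"
    using S(1,2) by (simp add: card_insert_if)
  ultimately show ?case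
    using S w by (intro exI[of _ "insert w S"]) auto
qed

lemma card_edges_ge_of_arrows_matching:
  fixes F :: "'b graph" and G :: "'a graph"
  assumes F: "simple_graph F" and G: "simple_graph G" "edges G \<noteq> {}"
    and arrows: "arrows F (matching t) G" and "t \<ge> 1"
  shows "(t - 1) * max_degree G + card (edges G) \<le> card (edges F)"
proof -
  let ?E = "edges F"
  have fin: "finite ?E"
    using finite_edges[OF F] .
  note avoid = arrows_matching_has_copy_avoiding[OF arrows]
  obtain v where v: "v \<in> verts G" "degree G v = max_degree G"
    using max_degree_attained[OF G] .
  have "\<exists>w. max_degree G \<le> card {e \<in> ?E - incident_edges ?E S. w \<in> e}"
    if "finite S" "card S < t" for S
    using degree_le_of_has_copy[OF G(1) avoid[OF that] _ v(1)] fin v(2) by auto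
  then obtain S where S: "finite S" "card S \<le> t - 1"
    "(t - 1) * max_degree G \<le> card (incident_edges ?E S)"
    using incident_edges_greedy[OF fin, of t "max_degree G" "t - 1"] \<open>t \<ge> 1\<close> by auto
  have "card (edges G) \<le> card (?E - incident_edges ?E S)"
    using card_edges_le_of_has_copy[OF G(1) avoid[OF S(1)]] fin S(2) \<open>t \<ge> 1\<close> by auto
  moreover have "card ?E = card (incident_edges ?E S) + card (?E - incident_edges ?E S)"
    using fin incident_edges_subset[of ?E S]
    by (simp add: card_Diff_subset card_mono finite_subset)
  ultimately show ?thesis
    using S(3) by linarith
qed

section \<open>Subadditivity in the size of the matching\<close>

definition relabel :: "('a \<Rightarrow> 'b) \<Rightarrow> 'a graph \<Rightarrow> 'b graph" where
  "relabel h G = (h ` verts G, image h ` edges G)"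

lemma verts_relabel [simp]: "verts (relabel h G) = h ` verts G"
  and edges_relabel [simp]: "edges (relabel h G) = image h ` edges G"
  by (simp_all add: relabel_def verts_def edges_def)

lemma simple_graph_relabel:
  assumes "inj_on h (verts G)" "simple_graph G"
  shows "simple_graph (relabel h G)"
  unfolding simple_graph_def
proof (intro conjI ballI)
  show "finite (verts (relabel h G))"
    using assms(2) by (simp add: simple_graph_def)
next
  fix e assume "e \<in> edges (relabel h G)"
  then obtain e0 where e0: "e0 \<in> edges G" "e = h ` e0"
    by auto
  then obtain u v where uv: "u \<noteq> v" "u \<in> verts G" "v \<in> verts G" "e0 = {u, v}"
    using assms(2) by (blast elim: simple_graph_edgeE)
  then have "h u \<noteq> h v"
    using assms(1) by (metis inj_onD)
  with uv e0 show "\<exists>u v. u \<noteq> v \<and> u \<in> verts (relabel h G) \<and> v \<in> verts (relabel h G) \<and> e = {u, v}"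
    by (intro exI[of _ "h u"] exI[of _ "h v"]) auto
qed

lemma card_edges_relabel:
  assumes "inj_on h (verts G)" "simple_graph G"
  shows "card (edges (relabel h G)) = card (edges G)"
proof -
  have "inj_on (image h) (edges G)"
    using inj_on_image_Pow[OF assms(1)] edges_subset_Pow_verts[OF assms(2)] by (rule inj_on_subset)
  then show ?thesis
    by (simp add: card_image)
qed

lemma arrows_relabel:
  assumes "inj_on h (verts F)" "arrows F H G"
  shows "arrows (relabel h F) H G"
  unfolding arrows_def
proof (intro allI impI)
  fix R' assume "R' \<subseteq> edges (relabel h F)"
  define R where "R = {e \<in> edges F. h ` e \<in> R'}"
  have red: "image h ` R \<subseteq> R'" and blue: "image h ` (edges F - R) \<subseteq> edges (relabel h F) - R'"
    unfolding R_def by auto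
  have "has_copy H (verts F) R \<or> has_copy G (verts F) (edges F - R)"
    by (rule arrowsD[OF assms(2)]) (auto simp: R_def)
  then show "has_copy H (verts (relabel h F)) R' \<or>
             has_copy G (verts (relabel h F)) (edges (relabel h F) - R')"
  proof
    assume "has_copy H (verts F) R"
    from has_copy_mono[OF has_copy_image[OF this assms(1)] subset_refl red]
    show ?thesis by simp
  next
    assume "has_copy G (verts F) (edges F - R)"
    from has_copy_mono[OF has_copy_image[OF this assms(1)] subset_refl blue]
    show ?thesis by simp
  qed
qed

definition graph_union :: "'a graph \<Rightarrow> 'a graph \<Rightarrow> 'a graph" where
  "graph_union F1 F2 = (verts F1 \<union> verts F2, edges F1 \<union> edges F2)"

lemma verts_graph_union [simp]: "verts (graph_union F1 F2) = verts F1 \<union> verts F2"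
  and edges_graph_union [simp]: "edges (graph_union F1 F2) = edges F1 \<union> edges F2"
  by (simp_all add: graph_union_def verts_def edges_def)

lemma simple_graph_union:
  assumes "simple_graph F1" "simple_graph F2"
  shows "simple_graph (graph_union F1 F2)"
  unfolding simple_graph_def
proof (intro conjI ballI)
  show "finite (verts (graph_union F1 F2))"
    using assms by (simp add: simple_graph_def)
next
  fix e assume "e \<in> edges (graph_union F1 F2)"
  then obtain u v where "u \<noteq> v" "u \<in> verts (graph_union F1 F2)" "v \<in> verts (graph_union F1 F2)" "e = {u, v}"
    using assms by (auto elim: simple_graph_edgeE)
  then show "\<exists>u v. u \<noteq> v \<and> u \<in> verts (graph_union F1 F2) \<and> v \<in> verts (graph_union F1 F2) \<and> e = {u, v}"
    by blast
qed

lemma card_edges_graph_union: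
  assumes "simple_graph F1" "simple_graph F2" "verts F1 \<inter> verts F2 = {}"
  shows "card (edges (graph_union F1 F2)) = card (edges F1) + card (edges F2)"
proof -
  have "edges F1 \<inter> edges F2 = {}"
  proof (rule equals0I)
    fix e assume "e \<in> edges F1 \<inter> edges F2"
    then obtain u v where "u \<in> verts F1" "e = {u, v}"
      using assms(1) by (blast elim: simple_graph_edgeE)
    moreover have "e \<subseteq> verts F2"
      using \<open>e \<in> edges F1 \<inter> edges F2\<close> edges_subset_Pow_verts[OF assms(2)] by blast
    ultimately show False
      using assms(3) by blast
  qed
  then show ?thesis
    using finite_edges[OF assms(1)] finite_edges[OF assms(2)] by (simp add: card_Un_disjoint)
qed

lemma arrows_graph_union_matching_add:
  assumes "arrows F1 (matching s) G" "arrows F2 (matching t) G" "verts F1 \<inter> verts F2 = {}"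
  shows "arrows (graph_union F1 F2) (matching (s + t)) G"
  unfolding arrows_def
proof (intro allI impI)
  fix R assume "R \<subseteq> edges (graph_union F1 F2)"
  have "has_copy (matching s) (verts F1) (R \<inter> edges F1) \<or> has_copy G (verts F1) (edges F1 - R)"
    using arrowsD[OF assms(1), of "R \<inter> edges F1"] by (simp add: Diff_Int)
  moreover have "has_copy (matching t) (verts F2) (R \<inter> edges F2) \<or> has_copy G (verts F2) (edges F2 - R)"
    using arrowsD[OF assms(2), of "R \<inter> edges F2"] by (simp add: Diff_Int)
  moreover have "has_copy (matching (s + t)) (verts (graph_union F1 F2)) R"
    if "has_copy (matching s) (verts F1) (R \<inter> edges F1)" "has_copy (matching t) (verts F2) (R \<inter> edges F2)"
    using has_copy_mono[OF has_copy_matching_add[OF that assms(3)]] by simp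
  moreover have "has_copy G (verts (graph_union F1 F2)) (edges (graph_union F1 F2) - R)"
    if "has_copy G (verts F1) (edges F1 - R) \<or> has_copy G (verts F2) (edges F2 - R)"
    using that by (auto elim: has_copy_mono)
  ultimately show "has_copy (matching (s + t)) (verts (graph_union F1 F2)) R \<or>
                   has_copy G (verts (graph_union F1 F2)) (edges (graph_union F1 F2) - R)"
    by blast
qed

lemma arrows_matching_zero: "arrows F (matching 0) H"
  unfolding arrows_def has_copy_def by simp

lemma arrows_matching_one_self:
  assumes "simple_graph G"
  shows "arrows G (matching 1) G"
  unfolding arrows_def
proof (intro allI impI)
  fix R assume "R \<subseteq> edges G"
  show "has_copy (matching 1) (verts G) R \<or> has_copy G (verts G) (edges G - R)"
  proof (cases "R = {}")
    case True
    have "has_copy G (verts G) (edges G)"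
      unfolding has_copy_def by (intro exI[of _ id]) simp
    with True show ?thesis
      by simp
  next
    case False
    then obtain e where "e \<in> R"
      by blast
    then obtain u v where "u \<noteq> v" "u \<in> verts G" "v \<in> verts G" "{u, v} \<in> R"
      using \<open>R \<subseteq> edges G\<close> assms by (blast elim: simple_graph_edgeE)
    then have "has_copy (matching 1) (verts G) R"
      unfolding has_copy_matching_iff
      by (intro exI[of _ "\<lambda>i. if i = 0 then u else v"]) (auto simp: inj_on_def insert_commute)
    then show ?thesis ..
  qed
qed

lemma ex_nat_graph_arrows_matching_add:
  fixes F1 F2 :: "nat graph"
  assumes "simple_graph F1" "simple_graph F2" "arrows F1 (matching s) G" "arrows F2 (matching t) G"
  shows "\<exists>F :: nat graph. simple_graph F \<and> arrows F (matching (s + t)) G \<and>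
           card (edges F) = card (edges F1) + card (edges F2)"
proof -
  let ?F1 = "relabel (\<lambda>x. 2*x) F1" and ?F2 = "relabel (\<lambda>x. 2*x + 1) F2"
  have inj: "inj_on (\<lambda>x::nat. 2*x) A" "inj_on (\<lambda>x::nat. 2*x + 1) A" for A
    by (auto simp: inj_on_def)
  have simple: "simple_graph ?F1" "simple_graph ?F2"
    using simple_graph_relabel inj assms(1,2) by blast+
  have disjoint: "verts ?F1 \<inter> verts ?F2 = {}"
    by auto presburger
  have "arrows ?F1 (matching s) G" "arrows ?F2 (matching t) G"
    using arrows_relabel inj assms(3,4) by blast+
  then have "arrows (graph_union ?F1 ?F2) (matching (s + t)) G"
    using arrows_graph_union_matching_add disjoint by blast
  moreover have "card (edges (graph_union ?F1 ?F2)) = card (edges F1) + card (edges F2)"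
    using card_edges_graph_union[OF simple disjoint]
      card_edges_relabel[OF inj(1) assms(1)] card_edges_relabel[OF inj(2) assms(2)] by simp
  ultimately show ?thesis
    using simple_graph_union[OF simple] by blast
qed

lemma ex_nat_graph_arrows_matching:
  fixes G :: "'a graph"
  assumes "simple_graph G"
  shows "\<exists>F :: nat graph. simple_graph F \<and> arrows F (matching t) G"
proof (induction t)
  case 0
  have "simple_graph ({}, {})"
    by (simp add: simple_graph_def verts_def edges_def)
  then show ?case
    using arrows_matching_zero by blast
next
  case (Suc t)
  then obtain F :: "nat graph" where F: "simple_graph F" "arrows F (matching t) G"
    by blast
  obtain h :: "'a \<Rightarrow> nat" where h: "inj_on h (verts G)"
    using finite_imp_inj_to_nat_seg assms unfolding simple_graph_def by metis
  have "simple_graph (relabel h G)" "arrows (relabel h G) (matching 1) G"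
    using simple_graph_relabel[OF h assms] arrows_relabel[OF h arrows_matching_one_self[OF assms]] .
  then show ?case
    using ex_nat_graph_arrows_matching_add[OF F(1) _ F(2)] by fastforce
qed

lemma size_ramsey_attained:
  assumes "\<exists>F :: nat graph. simple_graph F \<and> arrows F G H"
  obtains F :: "nat graph" where "simple_graph F" "card (edges F) = size_ramsey G H" "arrows F G H"
proof -
  have "\<exists>m. \<exists>F :: nat graph. simple_graph F \<and> card (edges F) = m \<and> arrows F G H"
    using assms by blast
  from LeastI_ex[OF this] show thesis
    using that unfolding size_ramsey_def by blast
qed

lemma size_ramsey_le:
  fixes F :: "nat graph"
  assumes "simple_graph F" "arrows F G H"
  shows "size_ramsey G H \<le> card (edges F)"
  unfolding size_ramsey_def using assms by (intro Least_le) blast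

lemma size_ramsey_matching_add_le:
  assumes "simple_graph G"
  shows "size_ramsey (matching (s + t)) G \<le> size_ramsey (matching s) G + size_ramsey (matching t) G"
proof -
  obtain F1 :: "nat graph" where F1: "simple_graph F1" "card (edges F1) = size_ramsey (matching s) G"
    "arrows F1 (matching s) G"
    using size_ramsey_attained[OF ex_nat_graph_arrows_matching[OF assms]] .
  obtain F2 :: "nat graph" where F2: "simple_graph F2" "card (edges F2) = size_ramsey (matching t) G"
    "arrows F2 (matching t) G"
    using size_ramsey_attained[OF ex_nat_graph_arrows_matching[OF assms]] .
  show ?thesis
    using ex_nat_graph_arrows_matching_add[OF F1(1) F2(1) F1(3) F2(3)] F1(2) F2(2) size_ramsey_le
    by fastforce
qed

lemma size_ramsey_matching_ge:
  assumes "simple_graph G" "edges G \<noteq> {}" "t \<ge> 1"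
  shows "(t - 1) * max_degree G + card (edges G) \<le> size_ramsey (matching t) G"
proof -
  obtain F :: "nat graph" where F: "simple_graph F" "card (edges F) = size_ramsey (matching t) G"
    "arrows F (matching t) G"
    using size_ramsey_attained[OF ex_nat_graph_arrows_matching[OF assms(1)]] .
  show ?thesis
    using card_edges_ge_of_arrows_matching[OF F(1) assms(1,2) F(3) assms(3)] F(2) by simp
qed

lemma mult_max_degree_le_size_ramsey_matching:
  assumes "simple_graph G" "edges G \<noteq> {}"
  shows "t * max_degree G \<le> size_ramsey (matching t) G"
proof (cases "t = 0")
  case False
  then have "t * max_degree G = (t - 1) * max_degree G + max_degree G"
    by (cases t) auto
  moreover have "(t - 1) * max_degree G + card (edges G) \<le> size_ramsey (matching t) G"
    using size_ramsey_matching_ge[OF assms] False by simp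
  ultimately show ?thesis
    using max_degree_le_card_edges[OF assms] by linarith
qed simp

theorem proposition3p2:
  fixes G :: "'a graph"
  assumes "simple_graph G" and "edges G \<noteq> {}"
  shows "(\<forall>t::nat. t \<ge> 1 \<longrightarrow>
            size_ramsey (matching t) G \<ge> (t - 1) * max_degree G + card (edges G))
         \<and> rhat_inf G \<ge> real (max_degree G) / real (card (edges G))"
proof -
  define a where "a t = real (size_ramsey (matching t) G)" for t
  define L where "L = (INF t\<in>{1..}. a t / t)"
  have "(\<lambda>t. a t / t) \<longlonglongrightarrow> L"
    unfolding L_def a_def using size_ramsey_matching_add_le[OF assms(1)]
    by (intro fekete_subadditive_limit) (simp_all flip: of_nat_add)
  then have "(\<lambda>t. a t / t / card (edges G)) \<longlonglongrightarrow> L / card (edges G)"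
    unfolding divide_inverse[of _ "real (card (edges G))"] by (rule tendsto_mult_right)
  then have "rhat_inf G = L / card (edges G)"
    unfolding rhat_inf_def a_def by (simp add: limI divide_divide_eq_left)
  moreover have "max_degree G \<le> L"
    unfolding L_def a_def using mult_max_degree_le_size_ramsey_matching[OF assms]
    by (intro cINF_greatest) (auto simp: field_simps simp flip: of_nat_mult)
  ultimately show ?thesis
    using size_ramsey_matching_ge[OF assms] by (simp add: divide_right_mono)
qed

end
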